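(* Let $\Gamma\subseteq\mathbb R^n$ be an open convex set, $S\subseteq\Gamma$ a nonempty convex set, and $f:\Gamma\to\mathbb R$ a continuously differentiable function that is pseudoconvex on $\Gamma$. Let $\bar S=\arg\min\{f(x)\mid x\in S\}$ and $\bar x\in\bar S$. Define \[ \hat T_1:=\{x\in S\mid \nabla f(\bar x)^T(x-\bar x)=0,\ \exists\, p(x)>0:\ \nabla f(x)=p(x)\nabla f(\bar x)\}, \] \[ \hat T_2:=\{x\in S\mid \nabla f(\bar x)^T(x-\bar x)\le0,\ \exists\, p(x)>0:\ \nabla f(x)=p(x)\nabla f(\bar x)\}. \] Then $\bar S=\hat T_1=\hat T_2$.
   Context: A differentiable function $f$ on an open set $\Gamma$ is pseudoconvex on $\Gamma$ iff for all $x,y\in\Gamma$, $f(y)<f(x)$ implies $\nabla f(x)^T(y-x)<0$. *)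

theory Defs
  imports "HOL-Analysis.Analysis"
begin

definition pseudoconvex_on :: "(real^'n) set \<Rightarrow> (real^'n \<Rightarrow> real) \<Rightarrow> (real^'n \<Rightarrow> real^'n) \<Rightarrow> bool" where
  "pseudoconvex_on \<Gamma> f gf \<longleftrightarrow>
     (\<forall>x\<in>\<Gamma>. \<forall>y\<in>\<Gamma>. f y < f x \<longrightarrow> gf x \<bullet> (y - x) < 0)"

definition argmin_set :: "(real^'n \<Rightarrow> real) \<Rightarrow> (real^'n) set \<Rightarrow> (real^'n) set" where
  "argmin_set f S = {x \<in> S. \<forall>y\<in>S. f x \<le> f y}"

end

theory Submission
  imports Defs
begin

text \<open>
  At a minimiser \<open>a\<close> of \<open>f\<close> on the convex set \<open>S\<close> the first-order
  condition \<open>\<nabla>f(a)\<^sup>T(y - a) \<ge> 0\<close> holds for all \<open>y \<in> S\<close>. If \<open>\<nabla>f(a)\<^sup>Tv < 0\<close>, then \<open>f(a + tv) < f(a)\<close>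
  for small \<open>t > 0\<close>, so pseudoconvexity at another minimiser \<open>b\<close> gives
  \<open>\<nabla>f(b)\<^sup>T(a - b) + t\<nabla>f(b)\<^sup>Tv < 0\<close>, whence \<open>\<nabla>f(b)\<^sup>Tv < 0\<close> by the first-order condition at \<open>b\<close>.
  Thus the gradients at any two minimisers have the same open half-space of descent
  directions, so they are positive multiples of each other, and the first-order conditions at
  both points then force \<open>\<nabla>f(xbar)\<^sup>T(x - xbar) = 0\<close>. Conversely, a point \<open>x\<close> with
  \<open>\<nabla>f(x) = p\<nabla>f(xbar)\<close>, \<open>p > 0\<close>, and \<open>\<nabla>f(xbar)\<^sup>T(x - xbar) \<le> 0\<close> satisfies
  \<open>\<nabla>f(x)\<^sup>T(xbar - x) \<ge> 0\<close>, so by pseudoconvexity \<open>f(xbar) \<ge> f(x)\<close>.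
\<close>

lemma has_derivative_inner_directional_quotient:
  fixes f :: "'a::real_inner \<Rightarrow> real"
  assumes "(f has_derivative (\<lambda>h. g \<bullet> h)) (at x)"
  shows "((\<lambda>t. (f (x + t *\<^sub>R v) - f x) / t) \<longlongrightarrow> g \<bullet> v) (at_right 0)"
proof -
  have line: "((\<lambda>t. x + t *\<^sub>R v) has_derivative (\<lambda>h. h *\<^sub>R v)) (at 0)"
    by (auto intro!: derivative_eq_intros)
  have "((f \<circ> (\<lambda>t. x + t *\<^sub>R v)) has_derivative ((\<lambda>h. g \<bullet> h) \<circ> (\<lambda>h. h *\<^sub>R v))) (at 0)"
    by (rule diff_chain_at[OF line]) (simp add: assms)
  then have "((\<lambda>t. f (x + t *\<^sub>R v)) has_derivative (\<lambda>h. (g \<bullet> v) * h)) (at 0)"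
    by (simp add: o_def mult.commute)
  then have "((\<lambda>t. f (x + t *\<^sub>R v)) has_field_derivative (g \<bullet> v)) (at 0)"
    by (simp add: has_field_derivative_def)
  then have "((\<lambda>t. (f (x + t *\<^sub>R v) - f x) / t) \<longlongrightarrow> g \<bullet> v) (at 0)"
    by (simp add: has_field_derivative_iff)
  then show ?thesis
    by (rule tendsto_mono[OF at_le, rotated]) simp
qed

lemma eventually_descent_direction:
  fixes f :: "'a::real_inner \<Rightarrow> real"
  assumes "(f has_derivative (\<lambda>h. g \<bullet> h)) (at x)" and "g \<bullet> v < 0"
  shows "\<forall>\<^sub>F t in at_right 0. f (x + t *\<^sub>R v) < f x"
proof -
  have "\<forall>\<^sub>F t in at_right 0. (f (x + t *\<^sub>R v) - f x) / t < 0"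
    using order_tendstoD(2)[OF has_derivative_inner_directional_quotient[OF assms(1)] assms(2)] .
  with eventually_at_right_less show ?thesis
    by eventually_elim (simp add: divide_less_0_iff)
qed

lemma convex_minimiser_first_order:
  fixes f :: "'a::real_inner \<Rightarrow> real"
  assumes "(f has_derivative (\<lambda>h. g \<bullet> h)) (at x)"
    and "convex C" and "x \<in> C" and "y \<in> C" and min: "\<And>z. z \<in> C \<Longrightarrow> f x \<le> f z"
  shows "g \<bullet> (y - x) \<ge> 0"
proof (rule tendsto_lowerbound[OF has_derivative_inner_directional_quotient[OF assms(1)]])
  have "\<forall>\<^sub>F t in at_right 0. 0 < t \<and> t < (1::real)"
    by (auto simp: eventually_at_right_field intro!: exI[of _ 1])
  then show "\<forall>\<^sub>F t in at_right 0. 0 \<le> (f (x + t *\<^sub>R (y - x)) - f x) / t"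
  proof eventually_elim
    case (elim t)
    have "x + t *\<^sub>R (y - x) = (1 - t) *\<^sub>R x + t *\<^sub>R y"
      by (simp add: algebra_simps)
    then have "x + t *\<^sub>R (y - x) \<in> C"
      using elim \<open>convex C\<close> \<open>x \<in> C\<close> \<open>y \<in> C\<close> by (simp add: convex_def)
    then show ?case
      using elim min by simp
  qed
qed simp

lemma pos_multiple_if_same_descent_directions:
  fixes a b :: "'a::real_inner"
  assumes same: "\<And>v. a \<bullet> v < 0 \<longleftrightarrow> b \<bullet> v < 0"
  shows "\<exists>p>0. b = p *\<^sub>R a"
proof (cases "a = 0")
  case True
  then have "b = 0"
    using same[of "- b"] by simp
  with True show ?thesis
    by (intro exI[of _ 1]) simp
next
  case False
  then have aa: "a \<bullet> a > 0"
    by simp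
  define p where "p = (b \<bullet> a) / (a \<bullet> a)"
  define w where "w = b - p *\<^sub>R a"
  have wa: "w \<bullet> a = 0" "a \<bullet> w = 0"
    using aa by (simp_all add: w_def p_def inner_diff_left inner_diff_right inner_commute)
  have b: "b = p *\<^sub>R a + w"
    by (simp add: w_def)
  have "w = 0"
  proof (rule ccontr)
    assume "w \<noteq> 0"
    then have ww: "w \<bullet> w > 0"
      by simp
    \<comment> \<open>a descent direction for \<open>a\<close> along which \<open>b\<close> increases, by tilting \<open>-a\<close> towards \<open>w\<close>\<close>
    define s where "s = (p * (a \<bullet> a) + 1) / (w \<bullet> w)"
    define v where "v = - a + s *\<^sub>R w"
    have "a \<bullet> v < 0"
      using wa aa by (simp add: v_def inner_diff_right)
    moreover have "b \<bullet> v = s * (w \<bullet> w) - p * (a \<bullet> a)"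
      using wa by (simp add: b v_def inner_add_left inner_diff_right algebra_simps)
    moreover have "s * (w \<bullet> w) = p * (a \<bullet> a) + 1"
      using ww by (simp add: s_def)
    ultimately show False
      using same[of v] by simp
  qed
  moreover have "b \<bullet> (- a) < 0"
    using same[of "- a"] aa by simp
  ultimately have "p > 0"
    using aa b by (simp add: zero_less_mult_iff)
  with \<open>w = 0\<close> b show ?thesis
    by auto
qed

locale pseudoconvex_minimisation =
  fixes \<Gamma> S :: "(real^'n) set" and f :: "real^'n \<Rightarrow> real" and gf :: "real^'n \<Rightarrow> real^'n"
  assumes open_\<Gamma>: "open \<Gamma>" and S_subset: "S \<subseteq> \<Gamma>" and convex_S: "convex S"
    and grad: "\<And>x. x \<in> \<Gamma> \<Longrightarrow> (f has_derivative (\<lambda>h. gf x \<bullet> h)) (at x)"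
    and pseudo: "pseudoconvex_on \<Gamma> f gf"
begin

lemma argmin_first_order:
  assumes "a \<in> argmin_set f S" and "y \<in> S"
  shows "gf a \<bullet> (y - a) \<ge> 0"
  using assms S_subset
  by (intro convex_minimiser_first_order[OF grad convex_S]) (auto simp: argmin_set_def)

lemma argmin_descent_direction_transfer:
  assumes a: "a \<in> argmin_set f S" and b: "b \<in> argmin_set f S" and v: "gf a \<bullet> v < 0"
  shows "gf b \<bullet> v < 0"
proof -
  have "a \<in> \<Gamma>" and "b \<in> \<Gamma>" and "f a = f b"
    using a b S_subset by (auto simp: argmin_set_def intro: order.antisym)
  have "\<forall>\<^sub>F t in at_right 0. 0 < t \<and> a + t *\<^sub>R v \<in> \<Gamma> \<and> f (a + t *\<^sub>R v) < f a"
  proof (intro eventually_conj eventually_at_right_less)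
    show "\<forall>\<^sub>F t in at_right 0. a + t *\<^sub>R v \<in> \<Gamma>"
      by (rule topological_tendstoD[OF _ open_\<Gamma> \<open>a \<in> \<Gamma>\<close>]) (rule tendsto_eq_intros | simp)+
    show "\<forall>\<^sub>F t in at_right 0. f (a + t *\<^sub>R v) < f a"
      using eventually_descent_direction[OF grad[OF \<open>a \<in> \<Gamma>\<close>] v] .
  qed
  then obtain t where t: "0 < t" "a + t *\<^sub>R v \<in> \<Gamma>" "f (a + t *\<^sub>R v) < f a"
    using eventually_happens'[OF trivial_limit_at_right_real] by blast
  have "gf b \<bullet> (a - b) + t * (gf b \<bullet> v) = gf b \<bullet> ((a + t *\<^sub>R v) - b)"
    by (simp add: algebra_simps inner_add_right inner_diff_right)
  also have "\<dots> < 0"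
    using pseudo t \<open>b \<in> \<Gamma>\<close> \<open>f a = f b\<close> unfolding pseudoconvex_on_def by simp
  finally have "gf b \<bullet> (a - b) + t * (gf b \<bullet> v) < 0" .
  moreover have "gf b \<bullet> (a - b) \<ge> 0"
    using a by (intro argmin_first_order[OF b]) (simp add: argmin_set_def)
  ultimately have "t * (gf b \<bullet> v) < 0"
    by linarith
  with \<open>0 < t\<close> show ?thesis
    by (simp add: mult_less_0_iff)
qed

lemma argmin_gradients_pos_multiple:
  assumes "a \<in> argmin_set f S" and "b \<in> argmin_set f S"
  shows "\<exists>p>0. gf b = p *\<^sub>R gf a"
  using assms by (intro pos_multiple_if_same_descent_directions iffI) (auto intro: argmin_descent_direction_transfer)

lemma argmin_gradient_orthogonal:
  assumes a: "a \<in> argmin_set f S" and b: "b \<in> argmin_set f S"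
  shows "gf a \<bullet> (b - a) = 0"
proof -
  obtain p where "p > 0" and gb: "gf b = p *\<^sub>R gf a"
    using argmin_gradients_pos_multiple[OF a b] by blast
  have "gf a \<bullet> (b - a) \<ge> 0"
    using b by (intro argmin_first_order[OF a]) (simp add: argmin_set_def)
  moreover have "p * (gf a \<bullet> (a - b)) \<ge> 0"
    using argmin_first_order[OF b, of a] a gb by (simp add: argmin_set_def)
  then have "gf a \<bullet> (a - b) \<ge> 0"
    using \<open>p > 0\<close> by (simp add: zero_le_mult_iff)
  ultimately show ?thesis
    by (simp add: inner_diff_right)
qed

lemma mem_argmin_if_pos_multiple_gradient:
  assumes xbar: "xbar \<in> argmin_set f S" and "x \<in> S"
    and le: "gf xbar \<bullet> (x - xbar) \<le> 0" and "p > 0" and gx: "gf x = p *\<^sub>R gf xbar"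
  shows "x \<in> argmin_set f S"
proof -
  have "xbar \<in> S" and min: "\<And>y. y \<in> S \<Longrightarrow> f xbar \<le> f y"
    using xbar by (auto simp: argmin_set_def)
  have "gf x \<bullet> (xbar - x) = - p * (gf xbar \<bullet> (x - xbar))"
    by (simp add: gx inner_diff_right algebra_simps)
  also have "\<dots> \<ge> 0"
    using le \<open>p > 0\<close> by (simp add: mult_nonneg_nonpos)
  finally have "\<not> f xbar < f x"
    using pseudo \<open>x \<in> S\<close> \<open>xbar \<in> S\<close> S_subset unfolding pseudoconvex_on_def by force
  with min \<open>x \<in> S\<close> show ?thesis
    by (force simp: argmin_set_def)
qed

end

theorem corollary1:
  fixes \<Gamma> S :: "(real^'n) set" and f :: "real^'n \<Rightarrow> real"
    and gf :: "real^'n \<Rightarrow> real^'n" and xbar :: "real^'n"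
  assumes "open \<Gamma>" and "convex \<Gamma>"
    and "S \<subseteq> \<Gamma>" and "S \<noteq> {}" and "convex S"
    and grad: "\<And>x. x \<in> \<Gamma> \<Longrightarrow> (f has_derivative (\<lambda>h. gf x \<bullet> h)) (at x)"
    and "continuous_on \<Gamma> gf"
    and "pseudoconvex_on \<Gamma> f gf"
    and "xbar \<in> argmin_set f S"
  shows "argmin_set f S =
           {x \<in> S. gf xbar \<bullet> (x - xbar) = 0 \<and> (\<exists>p>0. gf x = p *\<^sub>R gf xbar)}
       \<and> argmin_set f S =
           {x \<in> S. gf xbar \<bullet> (x - xbar) \<le> 0 \<and> (\<exists>p>0. gf x = p *\<^sub>R gf xbar)}"
    (is "?A = ?T1 \<and> ?A = ?T2")
proof -
  interpret pseudoconvex_minimisation \<Gamma> S f gf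
    using assms by unfold_locales
  have "?A \<subseteq> ?T1"
    using argmin_gradient_orthogonal argmin_gradients_pos_multiple \<open>xbar \<in> argmin_set f S\<close>
    by (auto simp: argmin_set_def)
  moreover have "?T1 \<subseteq> ?T2"
    by auto
  moreover have "?T2 \<subseteq> ?A"
    using mem_argmin_if_pos_multiple_gradient \<open>xbar \<in> argmin_set f S\<close> by blast
  ultimately show ?thesis
    by blast
qed

end
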